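(* Let $S$ be an abundant semigroup with a quasi-ideal adequate transversal $S^0$. Then $S$ is quasi-adequate if and only if $\overline{xy}=\overline{x}\,\overline{y}$ for all $x,y\in S$.
   Context: For a semigroup $S$, $S^1$ is $S$ with an identity adjoined, $\mathcal{L},\mathcal{R}$ Green's relations. $\mathcal{R}^\ast=\{(a,b):\forall x,y\in S^1,\ xa=ya\iff xb=yb\}$, $\mathcal{L}^\ast=\{(a,b):\forall x,y\in S^1,\ ax=ay\iff bx=by\}$. $S$ is abundant if each $\mathcal{R}^\ast$- and $\mathcal{L}^\ast$-class contains an idempotent; adequate if also idempotents commute (then $a^+$, $a^\ast$ are the unique idempotents $\mathcal{R}^\ast$-, resp. $\mathcal{L}^\ast$-related to $a$). Quasi-adequate: abundant with idempotents forming a subsemigroup. An abundant subsemigroup $U$ of abundant $S$ is a $\ast$-subsemigroup if $\mathcal{L}^\ast(U)=\mathcal{L}^\ast(S)\cap(U\times U)$, $\mathcal{R}^\ast(U)=\mathcal{R}^\ast(S)\cap(U\times U)$. An adequate $\ast$-subsemigroup $S^0$ of abundant $S$ is an adequate transversal if each $x\in S$ has a unique $\overline{x}\in S^0$ and idempotents $e,f$ of $S$ with $x=e\overline{x}f$, $e\,\mathcal{L}\,\overline{x}^+$, $f\,\mathcal{R}\,\overline{x}^\ast$. It is a quasi-ideal if $S^0SS^0\subseteq S^0$. *)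

theory Defs
  imports Main
begin

text \<open>The semigroup S is the whole type 'a (class semigroup_mult). Subsemigroups
are subsets. Elements of U^1 are modelled as 'a option, None being the adjoined identity.\<close>

definition one_adj :: "'a set \<Rightarrow> 'a option set" where
  "one_adj A = insert None (Some ` A)"

fun lmul :: "'a::semigroup_mult option \<Rightarrow> 'a \<Rightarrow> 'a" where
  "lmul None a = a"
| "lmul (Some x) a = x * a"

fun rmul :: "'a::semigroup_mult \<Rightarrow> 'a option \<Rightarrow> 'a" where
  "rmul a None = a"
| "rmul a (Some x) = a * x"

definition idem :: "'a::semigroup_mult \<Rightarrow> bool" where
  "idem e \<longleftrightarrow> e * e = e"

definition subsemigroup :: "'a::semigroup_mult set \<Rightarrow> bool" where
  "subsemigroup A \<longleftrightarrow> (\<forall>a\<in>A. \<forall>b\<in>A. a * b \<in> A)"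

definition greenL :: "'a::semigroup_mult \<Rightarrow> 'a \<Rightarrow> bool" where
  "greenL a b \<longleftrightarrow> (\<exists>u. a = lmul u b) \<and> (\<exists>v. b = lmul v a)"

definition greenR :: "'a::semigroup_mult \<Rightarrow> 'a \<Rightarrow> bool" where
  "greenR a b \<longleftrightarrow> (\<exists>u. a = rmul b u) \<and> (\<exists>v. b = rmul a v)"

definition Rstar :: "'a::semigroup_mult set \<Rightarrow> 'a \<Rightarrow> 'a \<Rightarrow> bool" where
  "Rstar A a b \<longleftrightarrow> a \<in> A \<and> b \<in> A \<and>
     (\<forall>x\<in>one_adj A. \<forall>y\<in>one_adj A. lmul x a = lmul y a \<longleftrightarrow> lmul x b = lmul y b)"

definition Lstar :: "'a::semigroup_mult set \<Rightarrow> 'a \<Rightarrow> 'a \<Rightarrow> bool" where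
  "Lstar A a b \<longleftrightarrow> a \<in> A \<and> b \<in> A \<and>
     (\<forall>x\<in>one_adj A. \<forall>y\<in>one_adj A. rmul a x = rmul a y \<longleftrightarrow> rmul b x = rmul b y)"

definition abundant :: "'a::semigroup_mult set \<Rightarrow> bool" where
  "abundant A \<longleftrightarrow> subsemigroup A \<and>
     (\<forall>a\<in>A. (\<exists>e\<in>A. idem e \<and> Rstar A a e) \<and> (\<exists>e\<in>A. idem e \<and> Lstar A a e))"

definition adequate :: "'a::semigroup_mult set \<Rightarrow> bool" where
  "adequate A \<longleftrightarrow> abundant A \<and> (\<forall>e\<in>A. \<forall>f\<in>A. idem e \<longrightarrow> idem f \<longrightarrow> e * f = f * e)"

definition quasi_adequate :: "'a::semigroup_mult set \<Rightarrow> bool" where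
  "quasi_adequate A \<longleftrightarrow> abundant A \<and>
     (\<forall>e\<in>A. \<forall>f\<in>A. idem e \<longrightarrow> idem f \<longrightarrow> idem (e * f))"

definition star_subsemigroup :: "'a::semigroup_mult set \<Rightarrow> bool" where
  "star_subsemigroup U \<longleftrightarrow> abundant U \<and>
     (\<forall>a\<in>U. \<forall>b\<in>U. Lstar U a b \<longleftrightarrow> Lstar UNIV a b) \<and>
     (\<forall>a\<in>U. \<forall>b\<in>U. Rstar U a b \<longleftrightarrow> Rstar UNIV a b)"

definition dplus :: "'a::semigroup_mult set \<Rightarrow> 'a \<Rightarrow> 'a" where
  "dplus A a = (THE e. e \<in> A \<and> idem e \<and> Rstar A a e)"

definition dstar :: "'a::semigroup_mult set \<Rightarrow> 'a \<Rightarrow> 'a" where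
  "dstar A a = (THE e. e \<in> A \<and> idem e \<and> Lstar A a e)"

definition transversal_rep :: "'a::semigroup_mult set \<Rightarrow> 'a \<Rightarrow> 'a \<Rightarrow> bool" where
  "transversal_rep S0 x xb \<longleftrightarrow> xb \<in> S0 \<and> (\<exists>e f. idem e \<and> idem f \<and> x = e * xb * f \<and>
       greenL e (dplus S0 xb) \<and> greenR f (dstar S0 xb))"

definition adequate_transversal :: "'a::semigroup_mult set \<Rightarrow> bool" where
  "adequate_transversal S0 \<longleftrightarrow> adequate S0 \<and> star_subsemigroup S0 \<and>
     (\<forall>x. \<exists>!xb. transversal_rep S0 x xb)"

definition tbar :: "'a::semigroup_mult set \<Rightarrow> 'a \<Rightarrow> 'a" where
  "tbar S0 x = (THE xb. transversal_rep S0 x xb)"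

definition quasi_ideal :: "'a::semigroup_mult set \<Rightarrow> bool" where
  "quasi_ideal S0 \<longleftrightarrow> (\<forall>a\<in>S0. \<forall>s. \<forall>b\<in>S0. a * s * b \<in> S0)"

end

theory Submission
  imports Defs
begin

text \<open>Write x' for the element of S0 attached to x, so that x = e x' f with
e L x'+ and f R x'*. If the idempotents of S form a band, then for
x = e x' f and y = g y' h the middle product f g lies in the quasi-ideal S0 and
equals x'* y'+; hence xy = e (x'y') h, and shrinking e and h to the
idempotents of x'y' shows (xy)' = x'y'. Conversely, if x \<mapsto> x' is
multiplicative, an idempotent g has an idempotent g' = G and factors as g = e f
with e L G R f. For idempotents g = e f and h = k l the products f k and l e
lie in S0, so they equal their images G H and H G, and g h is idempotent because
G H is.\<close>

lemma greenL_refl: "greenL a a"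
  unfolding greenL_def by (metis lmul.simps(1))

lemma greenR_refl: "greenR a a"
  unfolding greenR_def by (metis rmul.simps(1))

lemma greenL_idem_iff:
  assumes "idem (p::'a::semigroup_mult)" "idem q"
  shows "greenL p q \<longleftrightarrow> p * q = p \<and> q * p = q"
proof
  have absorb: "lmul u r * r = lmul u r" if "idem r" for u and r :: 'a
    using that by (cases u) (simp_all add: idem_def mult.assoc)
  assume "greenL p q"
  then show "p * q = p \<and> q * p = q"
    unfolding greenL_def using absorb assms by metis
next
  assume "p * q = p \<and> q * p = q"
  then show "greenL p q"
    unfolding greenL_def by (metis lmul.simps(2))
qed

lemma greenR_idem_iff:
  assumes "idem (p::'a::semigroup_mult)" "idem q"
  shows "greenR p q \<longleftrightarrow> q * p = p \<and> p * q = q"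
proof
  have absorb: "r * rmul r u = rmul r u" if "idem r" for u and r :: 'a
    using that by (cases u) (simp_all add: idem_def flip: mult.assoc)
  assume "greenR p q"
  then show "q * p = p \<and> p * q = q"
    unfolding greenR_def using absorb assms by metis
next
  assume "q * p = p \<and> p * q = q"
  then show "greenR p q"
    unfolding greenR_def by (metis rmul.simps(2))
qed

lemma greenL_shrink:
  fixes e p c :: "'a::semigroup_mult"
  assumes "idem e" "idem c" "e * p = e" "p * e = p" "c * p = c"
  shows "idem (e * c) \<and> greenL (e * c) c"
proof -
  have ce: "c * e = c" using assms(4,5) by (metis mult.assoc)
  have "idem (e * c)"
    using ce assms(2) unfolding idem_def by (metis mult.assoc)
  moreover have "e * c * c = e * c" "c * (e * c) = c"
    using ce assms(2) unfolding idem_def by (metis mult.assoc)+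
  ultimately show ?thesis using greenL_idem_iff assms(2) by blast
qed

lemma greenR_shrink:
  fixes h q c :: "'a::semigroup_mult"
  assumes "idem h" "idem c" "q * h = h" "h * q = q" "q * c = c"
  shows "idem (c * h) \<and> greenR (c * h) c"
proof -
  have hc: "h * c = c" using assms(4,5) by (metis mult.assoc)
  have "idem (c * h)"
    using hc assms(2) unfolding idem_def by (metis mult.assoc)
  moreover have "c * (c * h) = c * h" "c * h * c = c"
    using hc assms(2) unfolding idem_def by (metis mult.assoc)+
  ultimately show ?thesis using greenR_idem_iff assms(2) by blast
qed

lemma Rstar_sym: "Rstar A a b \<Longrightarrow> Rstar A b a"
  unfolding Rstar_def by blast

lemma Lstar_sym: "Lstar A a b \<Longrightarrow> Lstar A b a"
  unfolding Lstar_def by blast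

lemma Rstar_refl: "a \<in> A \<Longrightarrow> Rstar A a a"
  unfolding Rstar_def by blast

lemma Lstar_refl: "a \<in> A \<Longrightarrow> Lstar A a a"
  unfolding Lstar_def by blast

lemma Rstar_left_unit:
  assumes "Rstar A a b" "x \<in> A" "x * a = a"
  shows "x * b = b"
proof -
  have "Some x \<in> one_adj A" "None \<in> one_adj A"
    using assms(2) unfolding one_adj_def by auto
  with assms show ?thesis unfolding Rstar_def by (metis lmul.simps)
qed

lemma Lstar_right_unit:
  assumes "Lstar A a b" "x \<in> A" "a * x = a"
  shows "b * x = b"
proof -
  have "Some x \<in> one_adj A" "None \<in> one_adj A"
    using assms(2) unfolding one_adj_def by auto
  with assms show ?thesis unfolding Lstar_def by (metis rmul.simps)
qed

lemma Rstar_idem_left_unit: "Rstar A a e \<Longrightarrow> idem e \<Longrightarrow> e * a = a"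
  by (metis Rstar_def Rstar_left_unit Rstar_sym idem_def)

lemma Lstar_idem_right_unit: "Lstar A a e \<Longrightarrow> idem e \<Longrightarrow> a * e = a"
  by (metis Lstar_def Lstar_right_unit Lstar_sym idem_def)

lemma dplus_eqI:
  assumes A: "adequate A" and e: "e \<in> A" "idem e" "Rstar A a e"
  shows "dplus A a = e"
  unfolding dplus_def
proof (rule the_equality)
  fix e' assume e': "e' \<in> A \<and> idem e' \<and> Rstar A a e'"
  have "e' * e = e" "e * e' = e'"
    using e e' Rstar_left_unit Rstar_idem_left_unit by metis+
  moreover have "e * e' = e' * e"
    using A e e' unfolding adequate_def by blast
  ultimately show "e' = e" by simp
qed (use e in blast)

lemma dstar_eqI:
  assumes A: "adequate A" and e: "e \<in> A" "idem e" "Lstar A a e"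
  shows "dstar A a = e"
  unfolding dstar_def
proof (rule the_equality)
  fix e' assume e': "e' \<in> A \<and> idem e' \<and> Lstar A a e'"
  have "e * e' = e" "e' * e = e'"
    using e e' Lstar_right_unit Lstar_idem_right_unit by metis+
  moreover have "e * e' = e' * e"
    using A e e' unfolding adequate_def by blast
  ultimately show "e' = e" by simp
qed (use e in blast)

lemma dplus_spec:
  assumes "adequate A" "a \<in> A"
  shows "dplus A a \<in> A \<and> idem (dplus A a) \<and> Rstar A a (dplus A a)"
proof -
  obtain e where "e \<in> A" "idem e" "Rstar A a e"
    using assms unfolding adequate_def abundant_def by blast
  then show ?thesis using dplus_eqI[OF assms(1)] by simp
qed

lemma dstar_spec:
  assumes "adequate A" "a \<in> A"
  shows "dstar A a \<in> A \<and> idem (dstar A a) \<and> Lstar A a (dstar A a)"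
proof -
  obtain e where "e \<in> A" "idem e" "Lstar A a e"
    using assms unfolding adequate_def abundant_def by blast
  then show ?thesis using dstar_eqI[OF assms(1)] by simp
qed

lemma dplus_left_unit: "adequate A \<Longrightarrow> a \<in> A \<Longrightarrow> dplus A a * a = a"
  using dplus_spec Rstar_idem_left_unit by blast

lemma dstar_right_unit: "adequate A \<Longrightarrow> a \<in> A \<Longrightarrow> a * dstar A a = a"
  using dstar_spec Lstar_idem_right_unit by blast

lemma dplus_idem: "adequate A \<Longrightarrow> e \<in> A \<Longrightarrow> idem e \<Longrightarrow> dplus A e = e"
  by (simp add: dplus_eqI Rstar_refl)

lemma dstar_idem: "adequate A \<Longrightarrow> e \<in> A \<Longrightarrow> idem e \<Longrightarrow> dstar A e = e"
  by (simp add: dstar_eqI Lstar_refl)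

lemma dplus_below:
  assumes A: "adequate A" and "a \<in> A" "p \<in> A" "idem p" "p * a = a"
  shows "dplus A a * p = dplus A a"
proof -
  have "p * dplus A a = dplus A a"
    using assms dplus_spec Rstar_left_unit by metis
  moreover have "p * dplus A a = dplus A a * p"
    using assms dplus_spec unfolding adequate_def by metis
  ultimately show ?thesis by simp
qed

lemma dstar_below:
  assumes A: "adequate A" and "a \<in> A" "q \<in> A" "idem q" "a * q = a"
  shows "q * dstar A a = dstar A a"
proof -
  have "dstar A a * q = dstar A a"
    using assms dstar_spec Lstar_right_unit by metis
  moreover have "q * dstar A a = dstar A a * q"
    using assms dstar_spec unfolding adequate_def by metis
  ultimately show ?thesis by simp
qed

lemma quasi_ideal_absorb:
  assumes "quasi_ideal S0" "a \<in> S0" "b \<in> S0" "a * s = s" "s * b = s"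
  shows "s \<in> S0"
  using assms unfolding quasi_ideal_def by metis

locale quasi_ideal_adequate_transversal =
  fixes S0 :: "'a::semigroup_mult set"
  assumes transversal: "adequate_transversal S0"
    and quasi_ideal: "quasi_ideal S0"
begin

lemma adequate: "adequate S0"
  using transversal unfolding adequate_transversal_def by blast

lemma mult_closed: "a \<in> S0 \<Longrightarrow> b \<in> S0 \<Longrightarrow> a * b \<in> S0"
  using adequate unfolding adequate_def abundant_def subsemigroup_def by blast

lemma idem_commute: "e \<in> S0 \<Longrightarrow> f \<in> S0 \<Longrightarrow> idem e \<Longrightarrow> idem f \<Longrightarrow> e * f = f * e"
  using adequate unfolding adequate_def by blast

lemma tbar_rep: "transversal_rep S0 x (tbar S0 x)"
  using transversal unfolding adequate_transversal_def tbar_def by (metis theI')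

lemma tbar_eqI: "transversal_rep S0 x z \<Longrightarrow> tbar S0 x = z"
  using transversal unfolding adequate_transversal_def tbar_def by (metis the1_equality)

lemma tbar_in: "tbar S0 x \<in> S0"
  using tbar_rep unfolding transversal_rep_def by blast

lemma tbar_fixed: "a \<in> S0 \<Longrightarrow> tbar S0 a = a"
proof (rule tbar_eqI)
  assume a: "a \<in> S0"
  have "a = dplus S0 a * a * dstar S0 a"
    using a adequate dplus_left_unit dstar_right_unit by metis
  then show "transversal_rep S0 a a"
    unfolding transversal_rep_def
    using a adequate dplus_spec dstar_spec greenL_refl greenR_refl by blast
qed

lemma decompose:
  obtains e f where "idem e" "idem f" "x = e * tbar S0 x * f"
    "e * dplus S0 (tbar S0 x) = e" "dplus S0 (tbar S0 x) * e = dplus S0 (tbar S0 x)"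
    "dstar S0 (tbar S0 x) * f = f" "f * dstar S0 (tbar S0 x) = dstar S0 (tbar S0 x)"
proof -
  obtain e f where ef: "idem e" "idem f" "x = e * tbar S0 x * f"
    and eL: "greenL e (dplus S0 (tbar S0 x))" and fR: "greenR f (dstar S0 (tbar S0 x))"
    using tbar_rep unfolding transversal_rep_def by blast
  have "idem (dplus S0 (tbar S0 x))" "idem (dstar S0 (tbar S0 x))"
    using adequate dplus_spec dstar_spec tbar_in by blast+
  then show ?thesis
    using that[OF ef] eL fR greenL_idem_iff[OF ef(1)] greenR_idem_iff[OF ef(2)] by blast
qed

text \<open>Both f g and a b are idempotents of S0, hence commute, and
a b (f g) a b = a b because g f is idempotent.\<close>

lemma band_middle_factor:
  assumes band: "\<forall>e f::'a. idem e \<longrightarrow> idem f \<longrightarrow> idem (e * f)"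
    and a: "a \<in> S0" "idem a" and b: "b \<in> S0" "idem b" and f: "idem f" and g: "idem g"
    and af: "a * f = f" and fa: "f * a = a" and gb: "g * b = g" and bg: "b * g = b"
  shows "f * g = a * b"
proof -
  have ab: "a * b \<in> S0" "idem (a * b)" using a b band mult_closed by blast+
  have afg: "a * (f * g) = f * g" and fgb: "f * g * b = f * g"
    using af gb by (metis mult.assoc)+
  then have fg: "f * g \<in> S0" "idem (f * g)"
    using quasi_ideal_absorb[OF quasi_ideal a(1) b(1)] band f g by blast+
  have comm: "a * b * (f * g) = f * g * (a * b)"
    using idem_commute[OF ab(1) fg(1) ab(2) fg(2)] .
  have gf: "g * f * (g * f) = g * f" using band f g unfolding idem_def by blast
  have "a * b * (f * g) * (a * b) = a * (b * g) * (f * g) * (f * a) * b"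
    using fa bg by (simp add: mult.assoc)
  also have "\<dots> = a * b * (g * f * (g * f)) * a * b" by (simp add: mult.assoc)
  also have "\<dots> = a * (b * g) * (f * a) * b" using gf by (metis mult.assoc)
  also have "\<dots> = a * b" using fa bg ab(2) unfolding idem_def by (metis mult.assoc)
  finally have "a * b * (f * g) * (a * b) = a * b" .
  then have abfg: "a * b * (f * g) = a * b"
    using comm ab(2) unfolding idem_def by (metis mult.assoc)
  have "f * g * a = a * (f * g)" using idem_commute[OF fg(1) a(1) fg(2) a(2)] .
  then have "f * g * (a * b) = f * g"
    using afg fgb by (metis mult.assoc)
  then show ?thesis using abfg comm by simp
qed

lemma tbar_mult_of_band:
  assumes band: "\<forall>e f::'a. idem e \<longrightarrow> idem f \<longrightarrow> idem (e * f)"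
  shows "tbar S0 (x * y) = tbar S0 x * tbar S0 y"
proof (rule tbar_eqI)
  let ?x = "tbar S0 x" and ?y = "tbar S0 y"
  define z where "z = ?x * ?y"
  have xS: "?x \<in> S0" and yS: "?y \<in> S0" and zS: "z \<in> S0"
    using tbar_in mult_closed z_def by blast+
  obtain e f where e: "idem e" "e * dplus S0 ?x = e" "dplus S0 ?x * e = dplus S0 ?x"
    and f: "idem f" "dstar S0 ?x * f = f" "f * dstar S0 ?x = dstar S0 ?x"
    and x: "x = e * ?x * f"
    by (rule decompose[of x])
  obtain g h where g: "idem g" "g * dplus S0 ?y = g" "dplus S0 ?y * g = dplus S0 ?y"
    and h: "idem h" "dstar S0 ?y * h = h" "h * dstar S0 ?y = dstar S0 ?y"
    and y: "y = g * ?y * h"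
    by (rule decompose[of y])
  have fg: "f * g = dstar S0 ?x * dplus S0 ?y"
    using band_middle_factor[OF band _ _ _ _ f(1) g(1) f(2,3) g(2,3)]
      dstar_spec[OF adequate xS] dplus_spec[OF adequate yS] by blast
  have "x * y = e * ?x * (f * g) * ?y * h" by (subst x, subst y) (simp add: mult.assoc)
  also have "\<dots> = e * (?x * dstar S0 ?x) * (dplus S0 ?y * ?y) * h"
    using fg by (simp add: mult.assoc)
  also have "\<dots> = e * z * h"
    using dstar_right_unit[OF adequate xS] dplus_left_unit[OF adequate yS]
    by (simp add: z_def mult.assoc)
  finally have xy: "x * y = e * z * h" .
  have "dplus S0 ?x * z = z"
    using dplus_left_unit[OF adequate xS] by (simp add: z_def flip: mult.assoc)
  then have "dplus S0 z * dplus S0 ?x = dplus S0 z"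
    using dplus_below[OF adequate zS] dplus_spec[OF adequate xS] by blast
  then have e': "idem (e * dplus S0 z) \<and> greenL (e * dplus S0 z) (dplus S0 z)"
    using greenL_shrink[OF e(1) _ e(2,3)] dplus_spec[OF adequate zS] by blast
  have "z * dstar S0 ?y = z"
    using dstar_right_unit[OF adequate yS] by (simp add: z_def mult.assoc)
  then have "dstar S0 ?y * dstar S0 z = dstar S0 z"
    using dstar_below[OF adequate zS] dstar_spec[OF adequate yS] by blast
  then have h': "idem (dstar S0 z * h) \<and> greenR (dstar S0 z * h) (dstar S0 z)"
    using greenR_shrink[OF h(1) _ h(2,3)] dstar_spec[OF adequate zS] by blast
  have "(e * dplus S0 z) * z * (dstar S0 z * h) = e * (dplus S0 z * z) * dstar S0 z * h"
    by (simp add: mult.assoc)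
  also have "\<dots> = e * (z * dstar S0 z) * h"
    using dplus_left_unit[OF adequate zS] by (simp add: mult.assoc)
  also have "\<dots> = x * y"
    using xy dstar_right_unit[OF adequate zS] by simp
  finally show "transversal_rep S0 (x * y) z"
    unfolding transversal_rep_def using zS e' h' by metis
qed

context
  assumes hom: "\<forall>x y. tbar S0 (x * y) = tbar S0 x * tbar S0 y"
begin

lemma tbar_idem: "idem g \<Longrightarrow> idem (tbar S0 g)"
  using hom unfolding idem_def by metis

lemma idem_factor:
  fixes g :: 'a
  assumes "idem g"
  obtains e f where "g = e * f" "e * tbar S0 g = e" "tbar S0 g * f = f"
    "tbar S0 e = tbar S0 g" "tbar S0 f = tbar S0 g"
proof -
  let ?G = "tbar S0 g"
  have GS: "?G \<in> S0" and iG: "idem ?G" using tbar_in tbar_idem assms by blast+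
  then have plus: "dplus S0 ?G = ?G" and star: "dstar S0 ?G = ?G"
    using adequate dplus_idem dstar_idem by blast+
  obtain e f where "idem e" "idem f" and g: "g = e * ?G * f"
    and "e * dplus S0 ?G = e" "dplus S0 ?G * e = dplus S0 ?G"
    and "dstar S0 ?G * f = f" "f * dstar S0 ?G = dstar S0 ?G"
    by (rule decompose[of g])
  then have e: "idem e" "e * ?G = e" "?G * e = ?G" and f: "idem f" "?G * f = f" "f * ?G = ?G"
    unfolding plus star by blast+
  have "greenL e ?G" using greenL_idem_iff[OF e(1) iG] e by blast
  moreover have "e = e * ?G * ?G" using e(2) by (simp add: mult.assoc)
  ultimately have "transversal_rep S0 e ?G"
    unfolding transversal_rep_def plus star using GS e(1) iG greenR_refl by blast
  then have te: "tbar S0 e = ?G" by (rule tbar_eqI)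
  have "greenR f ?G" using greenR_idem_iff[OF f(1) iG] f by blast
  moreover have "f = ?G * ?G * f" using f(2) by (simp add: mult.assoc)
  ultimately have "transversal_rep S0 f ?G"
    unfolding transversal_rep_def plus star using GS f(1) iG greenL_refl by blast
  then have tf: "tbar S0 f = ?G" by (rule tbar_eqI)
  have "g = e * f" using g e(2) by simp
  then show ?thesis using that e f te tf by blast
qed

lemma tbar_hom_middle:
  fixes f k :: 'a
  assumes "G * f = f" "tbar S0 f = G" "k * H = k" "tbar S0 k = H" "G \<in> S0" "H \<in> S0"
  shows "f * k = G * H"
proof -
  have "f * k \<in> S0"
    using quasi_ideal_absorb[OF quasi_ideal assms(5,6)] assms(1,3) by (metis mult.assoc)
  then have "f * k = tbar S0 (f * k)" by (simp add: tbar_fixed)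
  also have "\<dots> = G * H" using hom assms(2,4) by simp
  finally show ?thesis .
qed

lemma idem_mult_of_tbar_hom:
  fixes g h :: 'a
  assumes "idem g" "idem h"
  shows "idem (g * h)"
proof -
  define G H where "G = tbar S0 g" and "H = tbar S0 h"
  obtain e f where g: "g = e * f" "e * G = e" "G * f = f" "tbar S0 e = G" "tbar S0 f = G"
    using idem_factor[OF assms(1)] unfolding G_def by metis
  obtain k l where h: "h = k * l" "k * H = k" "H * l = l" "tbar S0 k = H" "tbar S0 l = H"
    using idem_factor[OF assms(2)] unfolding H_def by metis
  have GH: "G \<in> S0" "H \<in> S0" "idem G" "idem H"
    using tbar_in tbar_idem assms unfolding G_def H_def by blast+
  have HG: "H * G = G * H" using idem_commute[OF GH] by simp
  have fk: "f * k = G * H" and le: "l * e = G * H"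
    using tbar_hom_middle[OF g(3,5) h(2,4) GH(1,2)]
      tbar_hom_middle[OF h(3,5) g(2,4) GH(2,1)] HG by simp_all
  have GH_idem: "G * H * (G * H) = G * H"
    using HG GH(3,4) unfolding idem_def by (metis mult.assoc)
  have gh: "g * h = e * (G * H) * l"
    using g(1) h(1) fk by (metis mult.assoc)
  then have "g * h * (g * h) = e * (G * H * (l * e) * (G * H)) * l"
    by (simp add: mult.assoc)
  also have "\<dots> = g * h"
    using gh GH_idem by (simp only: le)
  finally show ?thesis unfolding idem_def .
qed

end

end

theorem proposition2p7:
  fixes S0 :: "'a::semigroup_mult set"
  assumes "abundant (UNIV :: 'a set)"
    and "adequate_transversal S0"
    and "quasi_ideal S0"
  shows "quasi_adequate (UNIV :: 'a set) \<longleftrightarrow>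
         (\<forall>x y. tbar S0 (x * y) = tbar S0 x * tbar S0 y)"
proof -
  interpret quasi_ideal_adequate_transversal S0
    using assms(2,3) by unfold_locales
  show ?thesis
  proof
    assume "quasi_adequate (UNIV :: 'a set)"
    then show "\<forall>x y. tbar S0 (x * y) = tbar S0 x * tbar S0 y"
      unfolding quasi_adequate_def using tbar_mult_of_band by blast
  next
    assume "\<forall>x y. tbar S0 (x * y) = tbar S0 x * tbar S0 y"
    then show "quasi_adequate (UNIV :: 'a set)"
      unfolding quasi_adequate_def using assms(1) idem_mult_of_tbar_hom by blast
  qed
qed

end
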